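(* Let $f\in K$ and suppose that for every strictly increasing sequence $\mathbf a$ of positive integers, $f$ has finite order with respect to $A_{\mathbf a}$ (i.e. $A_{\mathbf a}^d f=f$ for some $d\ge1$). Then there exists a strictly increasing sequence $\mathbf b$ of positive integers such that $A_{\mathbf b}f$ is quasi-symmetric.
   Context: $K$ is the ring of integer formal power series of bounded degree in $x_1,x_2,\dots$; $f\in K$ is quasi-symmetric if the coefficient of $x_{i_1}^{a_1}\cdots x_{i_k}^{a_k}$ equals that of $x_{j_1}^{a_1}\cdots x_{j_k}^{a_k}$ whenever $i_1<\dots<i_k$, $j_1<\dots<j_k$. For a strictly increasing sequence $\mathbf a=(1\le a_1<a_2<\cdots)$, $A_{\mathbf a}:K\to K$ is the algebra homomorphism substituting $x_{a_i}\mapsto x_i$ for all $i$ and every variable not of the form $x_{a_i}$ by $0$. *)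

theory Defs
  imports Main
begin

text \<open>Variables are indexed from 0 (x_0, x_1, ... stands for the paper's x_1, x_2, ...).
  A monomial is an exponent vector; a series assigns an integer coefficient to each monomial.\<close>

type_synonym mon = "nat \<Rightarrow> nat"
type_synonym ser = "mon \<Rightarrow> int"

definition supp :: "mon \<Rightarrow> nat set" where
  "supp m = {i. m i \<noteq> 0}"

definition deg :: "mon \<Rightarrow> nat" where
  "deg m = (\<Sum>i\<in>supp m. m i)"

text \<open>The ring K: integer formal power series of bounded degree (only genuine monomials,
  i.e. finitely supported exponent vectors, carry nonzero coefficients).\<close>
definition inK :: "ser \<Rightarrow> bool" where
  "inK f \<longleftrightarrow> (\<exists>D. \<forall>m. f m \<noteq> 0 \<longrightarrow> finite (supp m) \<and> deg m \<le> D)"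

text \<open>The substitution homomorphism A_a (a strictly increasing): x_{a i} \<mapsto> x_i, all other
  variables \<mapsto> 0. Coefficientwise: the coefficient of m in A_a f is the coefficient in f of the
  unique monomial supported on range a that is sent to m.\<close>
definition A :: "(nat \<Rightarrow> nat) \<Rightarrow> ser \<Rightarrow> ser" where
  "A a f = (\<lambda>m. f (\<lambda>j. if j \<in> range a then m (inv a j) else 0))"

definition exps :: "mon \<Rightarrow> nat list" where
  "exps m = map m (sorted_list_of_set (supp m))"

definition qsym :: "ser \<Rightarrow> bool" where
  "qsym f \<longleftrightarrow> (\<forall>m m'. finite (supp m) \<and> finite (supp m') \<and> exps m = exps m' \<longrightarrow> f m = f m')"

end

theory Submission
  imports Defs
begin

text \<open>Fix a monomial m in the first K variables. Finite order of every A_a forces f to take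
  the value f(m) on the image of m under every sufficiently spaced substitution x_i |-> x_{a(i)}.
  Otherwise choose counterexamples T_1, T_2, ..., each spaced far beyond the previous one. Then
  the displacement T_{d+1}(i) - T_d(i) grows with the point T_d(i), so
  \<sigma>(x) = x + (largest displacement at a point \<le> x) is strictly increasing with \<sigma>^d = T_d
  on the first K indices, and A_\<sigma>^d f = f contradicts the choice of T_d. Both m and its
  compression to the first variables are sent to one common widely spaced monomial, so f(m)
  depends only on the exponent sequence of m: f itself is quasi-symmetric.\<close>

definition mon_map :: "(nat \<Rightarrow> nat) \<Rightarrow> mon \<Rightarrow> mon" where
  "mon_map a m = (\<lambda>j. if j \<in> range a then m (inv a j) else 0)"

lemma A_apply: "A a f m = f (mon_map a m)"
  by (simp add: A_def mon_map_def)

lemma mon_map_apply [simp]: "inj a \<Longrightarrow> mon_map a m (a i) = m i"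
  by (simp add: mon_map_def)

lemma mon_map_notin_range: "j \<notin> range a \<Longrightarrow> mon_map a m j = 0"
  by (simp add: mon_map_def)

lemma mon_map_id [simp]: "mon_map (\<lambda>i. i) m = m"
  by (simp add: mon_map_def)

lemma mon_map_comp:
  assumes "inj a" "inj b"
  shows "mon_map b (mon_map a m) = mon_map (b \<circ> a) m"
proof
  fix j
  have inj_ba: "inj (b \<circ> a)" using assms by (simp add: inj_compose)
  show "mon_map b (mon_map a m) j = mon_map (b \<circ> a) m j"
  proof (cases "j \<in> range (b \<circ> a)")
    case True
    then obtain i where "j = b (a i)" by auto
    then show ?thesis using assms mon_map_apply[OF inj_ba, of m i] by simp
  next
    case False
    then have "j \<notin> range b \<or> (\<exists>k. j = b k \<and> k \<notin> range a)" by auto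
    then show ?thesis using False assms by (auto simp: mon_map_notin_range)
  qed
qed

lemma A_funpow: "inj a \<Longrightarrow> (A a ^^ d) f = A (a ^^ d) f"
proof (induction d)
  case 0
  then show ?case by (simp add: fun_eq_iff A_apply)
next
  case (Suc d)
  have "(A a ^^ Suc d) f = A a (A (a ^^ d) f)" using Suc by simp
  also have "\<dots> = A (a ^^ d \<circ> a) f"
    using Suc.prems by (simp add: fun_eq_iff A_apply mon_map_comp inj_fn)
  finally show ?case by (simp only: funpow_Suc_right)
qed

lemma mon_map_cong:
  assumes "inj a" "inj b" "supp m \<subseteq> {..<K}" "\<And>i. i < K \<Longrightarrow> a i = b i"
  shows "mon_map a m = mon_map b m"
proof
  fix j
  have zero: "mon_map c m j = 0" if inj_c: "inj c" and outside: "j \<notin> c ` {..<K}" for c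
  proof (cases "j \<in> range c")
    case True
    then obtain i where "j = c i" "\<not> i < K" using outside by auto
    then show ?thesis using inj_c assms(3) by (auto simp: supp_def)
  qed (simp add: mon_map_notin_range)
  have same_image: "a ` {..<K} = b ` {..<K}" using assms(4) by auto
  show "mon_map a m j = mon_map b m j"
  proof (cases "j \<in> a ` {..<K}")
    case True
    then obtain i where "i < K" "j = a i" by auto
    then show ?thesis using assms mon_map_apply[of a m i] mon_map_apply[of b m i] by simp
  qed (use zero assms same_image in metis)
qed

lemma strict_mono_extension:
  fixes pt incr :: "'a \<Rightarrow> nat"
  assumes finite_below: "\<And>x. finite {j \<in> J. pt j \<le> x}"
    and incr_mono: "\<And>j k. j \<in> J \<Longrightarrow> k \<in> J \<Longrightarrow> pt j \<le> pt k \<Longrightarrow> incr j \<le> incr k"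
  obtains \<sigma> where "strict_mono \<sigma>" "\<And>j. j \<in> J \<Longrightarrow> \<sigma> (pt j) = pt j + incr j"
proof
  define S where "S x = insert 0 (incr ` {j \<in> J. pt j \<le> x})" for x
  define \<sigma> where "\<sigma> x = x + Max (S x)" for x
  have finite_S: "finite (S x)" for x using finite_below by (simp add: S_def)
  show "strict_mono \<sigma>"
  proof (rule strict_monoI)
    fix x y :: nat
    assume "x < y"
    then have "S x \<subseteq> S y" by (auto simp: S_def)
    then have "Max (S x) \<le> Max (S y)" using finite_S by (auto intro: Max_mono simp: S_def)
    then show "\<sigma> x < \<sigma> y" using \<open>x < y\<close> by (simp add: \<sigma>_def)
  qed
  fix j
  assume "j \<in> J"
  have "Max (S (pt j)) = incr j"
  proof (rule Max_eqI)
    show "incr j \<in> S (pt j)" using \<open>j \<in> J\<close> by (auto simp: S_def)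
  qed (use finite_S \<open>j \<in> J\<close> incr_mono in \<open>auto simp: S_def\<close>)
  then show "\<sigma> (pt j) = pt j + incr j" by (simp add: \<sigma>_def)
qed

definition spaced :: "nat \<Rightarrow> (nat \<Rightarrow> nat) \<Rightarrow> bool" where
  "spaced N a \<longleftrightarrow> strict_mono a \<and> N \<le> a 0 \<and> (\<forall>i. a i + N \<le> a (Suc i))"

lemma spaced_gap:
  assumes "spaced N a" "i < j"
  shows "a i + N \<le> a j"
proof -
  have "a i + N \<le> a (Suc i)" using assms(1) by (simp add: spaced_def)
  also have "\<dots> \<le> a j" using assms by (simp add: spaced_def strict_mono_less_eq)
  finally show ?thesis .
qed

lemma spaced_mono: "spaced N a \<Longrightarrow> N' \<le> N \<Longrightarrow> spaced N' a"
  unfolding spaced_def by (metis add_le_mono le_refl le_trans)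

lemma spaced_comp:
  assumes a: "spaced N a" and e: "strict_mono e"
  shows "spaced N (a \<circ> e)"
  unfolding spaced_def
proof (intro conjI allI)
  show "strict_mono (a \<circ> e)" using a e by (simp add: spaced_def strict_mono_def)
  show "N \<le> (a \<circ> e) 0" using a by (auto simp: spaced_def strict_mono_less_eq intro: le_trans)
  fix i
  show "(a \<circ> e) i + N \<le> (a \<circ> e) (Suc i)"
    using spaced_gap[OF a] e by (simp add: strict_mono_def)
qed

lemma spaced_linear: "spaced N (\<lambda>i. Suc N * Suc i)"
  by (simp add: spaced_def strict_mono_def add_less_le_mono)

locale spaced_tower =
  fixes T :: "nat \<Rightarrow> nat \<Rightarrow> nat" and K :: nat
  assumes tower_0: "T 0 = id"
    and tower_Suc: "spaced (2 * T d K + 1) (T (Suc d))"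
begin

lemma strict_mono_T: "strict_mono (T d)"
  using tower_Suc by (cases d) (auto simp: tower_0 strict_mono_def spaced_def)

lemma T_mono: "i \<le> j \<Longrightarrow> T d i \<le> T d j"
  using strict_mono_T by (simp add: strict_mono_less_eq)

lemma T_Suc_0_ge: "2 * T d K + 1 \<le> T (Suc d) 0"
  using tower_Suc by (simp add: spaced_def)

lemma T_below_later: "d' < d \<Longrightarrow> T d' K < T d 0"
proof (induction d)
  case (Suc d)
  then have "T d' K \<le> T d K"
    using T_mono[of 0 K d] by (cases "d' = d") auto
  then show ?case using T_Suc_0_ge[of d] by simp
qed simp

lemma level_le_T: "d \<le> T d i"
proof (induction d arbitrary: i)
  case (Suc d)
  then show ?case using T_Suc_0_ge[of d] T_mono[of 0 i "Suc d"] Suc.IH[of K] by linarith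
qed simp

lemma T_le_T_Suc: "i \<le> K \<Longrightarrow> T d i \<le> T (Suc d) i"
  using T_Suc_0_ge[of d] T_mono[of 0 i "Suc d"] T_mono[of i K d] by linarith

text \<open>The spacing \<open>2 * T d K + 1\<close> of level \<open>Suc d\<close> is what makes the displacement
  \<open>T (Suc d) i - T d i\<close> of the points \<open>T d i\<close> (\<open>i < K\<close>) increase with the point.\<close>
lemma displacement_mono:
  assumes "i < K" "i' < K" "T d' i' \<le> T d i"
  shows "T (Suc d') i' - T d' i' \<le> T (Suc d) i - T d i"
proof -
  have top: "T d i \<le> T d K" using assms(1) T_mono by simp
  consider "d < d'" | "d' = d" "i' = i" | "d' = d" "i' < i" | "d' < d"
    using assms(3) strict_mono_less_eq[OF strict_mono_T] by fastforce
  then show ?thesis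
  proof cases
    case 1
    then have "T d i < T d' i'" using T_below_later[of d d'] top T_mono[of 0 i' d'] by linarith
    then show ?thesis using assms(3) by simp
  next
    case 3
    then have "T (Suc d) i' + (2 * T d K + 1) \<le> T (Suc d) i" using spaced_gap tower_Suc by blast
    then show ?thesis using 3 top by simp
  next
    case 4
    then have "T (Suc d') K \<le> T d K"
      using T_below_later[of "Suc d'" d] T_mono[of 0 K d] by (cases "Suc d' = d") auto
    moreover have "T (Suc d') i' \<le> T (Suc d') K" using assms(2) T_mono by simp
    moreover have "T (Suc d) 0 \<le> T (Suc d) i" using T_mono by simp
    ultimately show ?thesis using T_Suc_0_ge[of d] top by linarith
  qed simp
qed

lemma interpolating_map:
  obtains \<sigma> where "strict_mono \<sigma>" "\<And>d i. i < K \<Longrightarrow> (\<sigma> ^^ d) i = T d i"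
proof -
  define J :: "(nat \<times> nat) set" where "J = UNIV \<times> {..<K}"
  define pt where "pt = (\<lambda>(d, i). T d i)"
  define incr where "incr = (\<lambda>(d, i). T (Suc d) i - T d i)"
  have "finite {j \<in> J. pt j \<le> x}" for x
  proof (rule finite_subset)
    show "{j \<in> J. pt j \<le> x} \<subseteq> {..x} \<times> {..<K}"
      using level_le_T le_trans by (fastforce simp: J_def pt_def)
  qed simp
  moreover have "incr j \<le> incr k" if "j \<in> J" "k \<in> J" "pt j \<le> pt k" for j k
    using that displacement_mono by (auto simp: J_def pt_def incr_def)
  ultimately obtain \<sigma> where \<sigma>: "strict_mono \<sigma>"
    and \<sigma>_pt: "\<And>j. j \<in> J \<Longrightarrow> \<sigma> (pt j) = pt j + incr j"
    using strict_mono_extension by blast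
  have "(\<sigma> ^^ d) i = T d i" if "i < K" for d i
  proof (induction d)
    case (Suc d)
    then show ?case
      using \<sigma>_pt[of "(d, i)"] that T_le_T_Suc[of i d] by (simp add: J_def pt_def incr_def)
  qed (simp add: tower_0)
  then show ?thesis using \<sigma> that by blast
qed

end

lemma spaced_invariance:
  assumes finite_order: "\<forall>a. strict_mono a \<longrightarrow> (\<exists>d\<ge>1. (A a ^^ d) f = f)"
    and supp_m: "supp m \<subseteq> {..<K}"
  obtains N where "\<And>a. spaced N a \<Longrightarrow> f (mon_map a m) = f m"
proof -
  have "\<exists>N. \<forall>a. spaced N a \<longrightarrow> f (mon_map a m) = f m"
  proof (rule ccontr)
    assume "\<not> ?thesis"
    then obtain bad where bad: "\<And>N. spaced N (bad N)" "\<And>N. f (mon_map (bad N) m) \<noteq> f m"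
      by metis
    define T where "T = rec_nat id (\<lambda>_ T\<^sub>d. bad (2 * T\<^sub>d K + 1))"
    have T_Suc: "T (Suc d) = bad (2 * T d K + 1)" for d by (simp add: T_def)
    interpret spaced_tower T K
      by unfold_locales (simp_all add: T_def bad(1))
    obtain \<sigma> where \<sigma>: "strict_mono \<sigma>" and \<sigma>_T: "\<And>d i. i < K \<Longrightarrow> (\<sigma> ^^ d) i = T d i"
      using interpolating_map by blast
    obtain d where "d \<ge> 1" and fixed: "(A \<sigma> ^^ d) f = f" using finite_order \<sigma> by blast
    then obtain d' where d: "d = Suc d'" by (cases d) auto
    have inj_\<sigma>: "inj \<sigma>" using \<sigma> strict_mono_imp_inj_on by blast
    have "f m = f (mon_map (\<sigma> ^^ d) m)" using fixed A_funpow[OF inj_\<sigma>] A_apply by metis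
    also have "\<dots> = f (mon_map (T d) m)"
      using mon_map_cong[OF inj_fn[OF inj_\<sigma>] strict_mono_imp_inj_on[OF strict_mono_T] supp_m] \<sigma>_T
      by metis
    finally show False using bad(2) d T_Suc by metis
  qed
  then show ?thesis using that by blast
qed

definition mon_of_list :: "nat list \<Rightarrow> mon" where
  "mon_of_list xs = (\<lambda>i. if i < length xs then xs ! i else 0)"

lemma supp_mon_of_list: "supp (mon_of_list xs) \<subseteq> {..<length xs}"
  by (auto simp: supp_def mon_of_list_def split: if_splits)

lemma mon_map_mon_of_list_exps:
  assumes fin: "finite (supp m)"
  obtains e where "strict_mono e" "m = mon_map e (mon_of_list (exps m))"
proof
  define L where "L = sorted_list_of_set (supp m)"
  define n where "n = length L"
  define e where "e i = (if i < n then L ! i else Max (supp m) + 1 + i)" for i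
  have sorted_L: "sorted_wrt (<) L" unfolding L_def by (rule strict_sorted_list_of_set)
  have set_L: "set L = supp m" unfolding L_def using fin by simp
  have below_Max: "x \<in> supp m \<Longrightarrow> x \<le> Max (supp m)" for x using fin by simp
  have e_in_supp: "i < n \<Longrightarrow> e i \<in> supp m" for i
    using set_L nth_mem by (fastforce simp: e_def n_def)
  show e: "strict_mono e"
  proof (rule strict_monoI)
    fix i j :: nat
    assume "i < j"
    then show "e i < e j"
      using sorted_wrt_nth_less[OF sorted_L] e_in_supp[of i] below_Max[of "e i"]
      by (auto simp: e_def n_def)
  qed
  have supp_in_range: "supp m \<subseteq> range e"
  proof
    fix x
    assume "x \<in> supp m"
    then obtain i where "i < n" "x = L ! i" using set_L by (metis in_set_conv_nth n_def)
    then show "x \<in> range e" by (metis e_def rangeI)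
  qed
  show "m = mon_map e (mon_of_list (exps m))"
  proof
    fix j
    show "m j = mon_map e (mon_of_list (exps m)) j"
    proof (cases "j \<in> range e")
      case True
      then obtain i where j: "j = e i" by auto
      have "i \<ge> n \<Longrightarrow> m j = 0" using below_Max[of j] by (fastforce simp: j e_def supp_def)
      then show ?thesis
        using strict_mono_imp_inj_on[OF e]
        by (simp add: j mon_of_list_def exps_def L_def[symmetric] n_def[symmetric]) (simp add: e_def)
    next
      case False
      then show ?thesis using supp_in_range by (auto simp: mon_map_notin_range supp_def)
    qed
  qed
qed

lemma coeff_eq_compressed:
  assumes finite_order: "\<forall>a. strict_mono a \<longrightarrow> (\<exists>d\<ge>1. (A a ^^ d) f = f)"
    and fin: "finite (supp m)"
  shows "f m = f (mon_of_list (exps m))"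
proof -
  define c where "c = mon_of_list (exps m)"
  obtain e where e: "strict_mono e" and m_eq: "m = mon_map e c"
    using mon_map_mon_of_list_exps[OF fin] c_def by blast
  have "supp m \<subseteq> {..<Suc (Max (supp m))}" using fin by (auto simp: le_imp_less_Suc)
  then obtain N\<^sub>m where N\<^sub>m: "\<And>a. spaced N\<^sub>m a \<Longrightarrow> f (mon_map a m) = f m"
    using spaced_invariance[OF finite_order] by blast
  obtain N\<^sub>c where N\<^sub>c: "\<And>a. spaced N\<^sub>c a \<Longrightarrow> f (mon_map a c) = f c"
    using spaced_invariance[OF finite_order supp_mon_of_list] c_def by blast
  define a where "a i = Suc (max N\<^sub>m N\<^sub>c) * Suc i" for i
  have a: "spaced (max N\<^sub>m N\<^sub>c) a" unfolding a_def by (rule spaced_linear)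
  have "f m = f (mon_map a m)" using N\<^sub>m spaced_mono[OF a] by simp
  also have "\<dots> = f (mon_map (a \<circ> e) c)"
    using m_eq mon_map_comp strict_mono_imp_inj_on a e by (metis spaced_def)
  also have "\<dots> = f c" using N\<^sub>c spaced_mono[OF spaced_comp[OF a e]] by simp
  finally show ?thesis by (simp add: c_def)
qed

lemma qsym_if_finite_order:
  assumes "\<forall>a. strict_mono a \<longrightarrow> (\<exists>d\<ge>1. (A a ^^ d) f = f)"
  shows "qsym f"
  unfolding qsym_def using coeff_eq_compressed[OF assms] by metis

theorem lemma8p5:
  fixes f :: ser
  assumes "inK f"
    and "\<forall>a. strict_mono a \<longrightarrow> (\<exists>d\<ge>1. (A a ^^ d) f = f)"
  shows "\<exists>b. strict_mono b \<and> qsym (A b f)"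
proof (intro exI conjI)
  show "strict_mono (\<lambda>i::nat. i)" by (simp add: strict_mono_def)
  have "A (\<lambda>i. i) f = f" by (simp add: fun_eq_iff A_apply)
  then show "qsym (A (\<lambda>i. i) f)" using qsym_if_finite_order[OF assms(2)] by simp
qed

end
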